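(* Let $S$ take values in a finite set $\mathcal{S}$ with $P(s)>0$ for all $s$, and let $\mathbf{R}$ take values in a finite set $\mathcal{R}$, with joint distribution $P(s,\mathbf{r})$. Let $Q=(Q(\hat{\mathbf{r}}|\mathbf{r}))_{\mathbf{r},\hat{\mathbf{r}}\in\mathcal{R}}$ be a right stochastic matrix (rows and columns both indexed by $\mathcal{R}$ in the same order) that is idempotent ($Q^2=Q$) and has strictly positive diagonal, and let $\hat{\mathbf{R}}$ be the stochastic code with $P(\hat{\mathbf{r}}|s)=\sum_{\mathbf{r}}P(\mathbf{r}|s)Q(\hat{\mathbf{r}}|\mathbf{r})$. Suppose $g$ is a deterministic function such that $\bar{\mathbf{R}}=g(\hat{\mathbf{R}})$ satisfies $I(S;\bar{\mathbf{R}})=I(S;\hat{\mathbf{R}})$. Then $$\Delta I(\mathbf{R},\hat{\mathbf{R}})=\Delta I(\mathbf{R},\bar{\mathbf{R}})=\Delta I_D=\Delta I_{DL},\quad \Delta I(\mathbf{R},\hat{\mathbf{S}})=\Delta I_{LS},\quad \Delta I(\mathbf{R},\hat{S})=\Delta I_B,\quad \Delta A(\mathbf{R},\hat{\mathbf{R}})=\Delta A_B,$$ with all quantities as defined in the context.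
   Context: $I(S;X)=\sum_{s,x}P(s,x)\log\frac{P(s|x)}{P(s)}$ denotes mutual information, with conventions $0\log0=0$. For codes $X,Y$ taking values in $\mathcal{R}$, an optimal decoder constructed with $Y$ and operated on $X$ maps $x$ to $\arg\max_s P(S=s|Y=x)$ (ties broken by a fixed rule); its accuracy above chance is $A^{X}_{Y}=\sum_s P(S=s,\hat S=s)-\max_s P(s)$, where $\hat S$ is the decoder output when the input is $X$. Likewise the sorted list associated with $Y$ and operated on $X$ maps $x$ to the list of stimuli sorted in decreasing order of $P(S=s|Y=x)$ (fixed tie-breaking rule). Encoding-oriented measures: $\Delta I(\mathbf{R},\hat{\mathbf{R}})=I(S;\mathbf{R})-I(S;\hat{\mathbf{R}})$; $\Delta I(\mathbf{R},\bar{\mathbf{R}})=I(S;\mathbf{R})-I(S;\bar{\mathbf{R}})$; $\Delta I(\mathbf{R},\hat{\mathbf{S}})=I(S;\mathbf{R})-I(S;\hat{\mathbf{S}})$ where $\hat{\mathbf{S}}$ is the sorted list constructed with $\hat{\mathbf{R}}$ and operated on $\hat{\mathbf{R}}$; $\Delta I(\mathbf{R},\hat S)=I(S;\mathbf{R})-I(S;\hat S)$ where $\hat S$ is the optimal decoder output constructed with $\hat{\mathbf{R}}$ and operated on $\hat{\mathbf{R}}$; $\Delta A(\mathbf{R},\hat{\mathbf{R}})=A^{\mathbf{R}}_{\mathbf{R}}-A^{\hat{\mathbf{R}}}_{\hat{\mathbf{R}}}$. Decoding-oriented measures: $\Delta I_D=\sum_{s,\mathbf{r}}P(s,\mathbf{r})\ln\frac{P(s|\mathbf{r})}{P(S=s|\hat{\mathbf{R}}=\mathbf{r})}$;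 $\Delta I_{DL}=\min_{\theta\in\mathbb{R}}\sum_{s,\mathbf{r}}P(s,\mathbf{r})\ln\frac{P(s|\mathbf{r})}{P(s|\hat{\mathbf{R}}=\mathbf{r},\theta)}$, where $P(s|\hat{\mathbf{r}},\theta)$ is proportional (normalized over $s$) to: $P(s)$ if there exist $s',\bar{\mathbf{r}}$ with $P(\mathbf{R}=\bar{\mathbf{r}}|S=s')>P(\hat{\mathbf{R}}=\bar{\mathbf{r}}|S=s')=0$; $0$ if $P(\hat{\mathbf{R}}=\hat{\mathbf{r}}|S=s)=P(\mathbf{R}=\hat{\mathbf{r}}|S=s)=0$ holds for this $s$ but not for all stimuli; and $P(s)P(\hat{\mathbf{R}}=\hat{\mathbf{r}}|S=s)^{\theta}$ otherwise; $\Delta I_{LS}=I(S;\mathbf{R})-I(S;\mathbf{L})$ where $\mathbf{L}$ is the sorted list constructed with $\hat{\mathbf{R}}$ and operated on $\mathbf{R}$; $\Delta I_B=I(S;\mathbf{R})-I(S;\tilde S)$ where $\tilde S$ is the optimal decoder output constructed with $\hat{\mathbf{R}}$ and operated on $\mathbf{R}$; $\Delta A_B=A^{\mathbf{R}}_{\mathbf{R}}-A^{\mathbf{R}}_{\hat{\mathbf{R}}}$ (decoder constructed with $\hat{\mathbf{R}}$, operated on $\mathbf{R}$). *)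

theory Defs
  imports Complex_Main
begin

text \<open>A code X is represented by the joint distribution j s x = P(S=s, X=x)
 (j :: 's => 'x => real, 'x finite). Logarithms are natural, 0 log 0 = 0.
 Q r rh stands for Q(rh|r). Ties (in decoders and sorted lists) are broken by a fixed
 linear order on the stimuli: the smallest stimulus comes first.\<close>

definition mi_on :: "'c set \<Rightarrow> ('s::finite \<Rightarrow> 'c \<Rightarrow> real) \<Rightarrow> real" where
  "mi_on C j = (\<Sum>s\<in>UNIV. \<Sum>c\<in>C. if j s c = 0 then 0 else
      j s c * ln (j s c / ((\<Sum>c'\<in>C. j s c') * (\<Sum>s'\<in>UNIV. j s' c))))"

definition push :: "('s \<Rightarrow> 'x::finite \<Rightarrow> real) \<Rightarrow> ('x \<Rightarrow> 'c) \<Rightarrow> 's \<Rightarrow> 'c \<Rightarrow> real" where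
  "push j f s c = (\<Sum>x\<in>{x. f x = c}. j s x)"

definition margS :: "('s \<Rightarrow> 'x::finite \<Rightarrow> real) \<Rightarrow> 's \<Rightarrow> real" where
  "margS j s = (\<Sum>x\<in>UNIV. j s x)"

definition cond :: "('s::finite \<Rightarrow> 'x \<Rightarrow> real) \<Rightarrow> 's \<Rightarrow> 'x \<Rightarrow> real" where
  "cond j s x = j s x / (\<Sum>s'\<in>UNIV. j s' x)"

definition dec :: "('s::{finite,linorder} \<Rightarrow> 'x \<Rightarrow> real) \<Rightarrow> 'x \<Rightarrow> 's" where
  "dec j x = (LEAST s. \<forall>s'. cond j s' x \<le> cond j s x)"

text \<open>Sorted list constructed with the code whose joint is j (stable sort, so ties follow the order).\<close>
definition slist :: "('s::{finite,linorder} \<Rightarrow> 'x \<Rightarrow> real) \<Rightarrow> 'x \<Rightarrow> 's list" where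
  "slist j x = sort_key (\<lambda>s. - cond j s x) (sorted_list_of_set UNIV)"

definition acc :: "('s::finite \<Rightarrow> 'x::finite \<Rightarrow> real) \<Rightarrow> ('x \<Rightarrow> 's) \<Rightarrow> real" where
  "acc jX d = (\<Sum>s\<in>UNIV. push jX d s s) - Max (range (margS jX))"

definition phat :: "('s \<Rightarrow> 'r::finite \<Rightarrow> real) \<Rightarrow> ('r \<Rightarrow> 'r \<Rightarrow> real) \<Rightarrow> 's \<Rightarrow> 'r \<Rightarrow> real" where
  "phat p Q s rh = (\<Sum>r\<in>UNIV. p s r * Q r rh)"

definition dI_D :: "('s::finite \<Rightarrow> 'r::finite \<Rightarrow> real) \<Rightarrow> ('r \<Rightarrow> 'r \<Rightarrow> real) \<Rightarrow> real" where
  "dI_D p Q = (\<Sum>s\<in>UNIV. \<Sum>r\<in>UNIV. if p s r = 0 then 0 else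
      p s r * ln (cond p s r / cond (phat p Q) s r))"

definition dl_weight :: "('s::finite \<Rightarrow> 'r::finite \<Rightarrow> real) \<Rightarrow> ('r \<Rightarrow> 'r \<Rightarrow> real) \<Rightarrow> real \<Rightarrow> 'r \<Rightarrow> 's \<Rightarrow> real" where
  "dl_weight p Q \<theta> rh s =
     (let PR = (\<lambda>r s. p s r / margS p s);
          PRh = (\<lambda>r s. phat p Q s r / margS p s)
      in if (\<exists>s' rb. PR rb s' > PRh rb s' \<and> PRh rb s' = 0) then margS p s
         else if (PRh rh s = 0 \<and> PR rh s = 0) \<and> \<not> (\<forall>s'. PRh rh s' = 0 \<and> PR rh s' = 0) then 0
         else margS p s * (PRh rh s) powr \<theta>)"

definition dl_model :: "('s::finite \<Rightarrow> 'r::finite \<Rightarrow> real) \<Rightarrow> ('r \<Rightarrow> 'r \<Rightarrow> real) \<Rightarrow> real \<Rightarrow> 'r \<Rightarrow> 's \<Rightarrow> real" where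
  "dl_model p Q \<theta> rh s = dl_weight p Q \<theta> rh s / (\<Sum>s'\<in>UNIV. dl_weight p Q \<theta> rh s')"

definition dl_obj :: "('s::finite \<Rightarrow> 'r::finite \<Rightarrow> real) \<Rightarrow> ('r \<Rightarrow> 'r \<Rightarrow> real) \<Rightarrow> real \<Rightarrow> real" where
  "dl_obj p Q \<theta> = (\<Sum>s\<in>UNIV. \<Sum>r\<in>UNIV. if p s r = 0 then 0 else
      p s r * ln (cond p s r / dl_model p Q \<theta> r s))"

text \<open>Delta I_DL = min over theta (as an infimum; attainment is asserted in the theorem).\<close>
definition dI_DL :: "('s::finite \<Rightarrow> 'r::finite \<Rightarrow> real) \<Rightarrow> ('r \<Rightarrow> 'r \<Rightarrow> real) \<Rightarrow> real" where
  "dI_DL p Q = Inf (range (dl_obj p Q))"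

end

theory Submission
  imports Defs
begin

text \<open>An idempotent stochastic matrix Q with positive diagonal has Q(y|r) > 0 exactly
  when the rows of r and y coincide, so Q only mixes responses within classes of equal
  rows and leaves every class-invariant function unchanged. Hence class-invariant
  quantities have the same expectation under P(s,r) and P(s,rhat). The posterior
  P(s|Rhat=r) differs from the class mass of r only by the factor Q(r|r), so it is
  class-invariant, and so are the decoder and sorted list built from Rhat; this
  identifies each encoding measure with its decoding counterpart. Finally, the posterior
  of Rhat is the model of Delta I_DL at theta = 1, and by Gibbs' inequality no
  class-invariant model of P(s|r), in particular none with another theta, does better.\<close>

lemma column_sum_pos:
  fixes j :: "'s::finite \<Rightarrow> 'x \<Rightarrow> real"
  assumes "\<And>s. 0 \<le> j s x" and "0 < j s x"
  shows "0 < (\<Sum>s'\<in>UNIV. j s' x)"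
proof -
  have "j s x \<le> (\<Sum>s'\<in>UNIV. j s' x)"
    by (rule member_le_sum[where f = "\<lambda>s'. j s' x"]) (auto simp: assms(1))
  with assms(2) show ?thesis by simp
qed

lemma cond_pos:
  assumes "\<And>s. 0 \<le> j s x" and "0 < j s x"
  shows "0 < cond j s x"
  using column_sum_pos[of j x s] assms by (simp add: cond_def)

lemma push_eq_sum_if: "push j f s c = (\<Sum>x\<in>UNIV. j s x * (if f x = c then 1 else 0))"
  unfolding push_def by (simp add: sum.inter_filter[symmetric] if_distrib cong: if_cong)

lemma mi_on_UNIV_eq:
  fixes j :: "'s::finite \<Rightarrow> 'x::finite \<Rightarrow> real"
  assumes j_nonneg: "\<And>s x. 0 \<le> j s x" and margS_pos: "\<And>s. 0 < margS j s"
  shows "mi_on UNIV j = (\<Sum>s\<in>UNIV. \<Sum>x\<in>UNIV. j s x * (ln (cond j s x) - ln (margS j s)))"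
proof -
  have "(if j s x = 0 then 0 else
          j s x * ln (j s x / ((\<Sum>c'\<in>UNIV. j s c') * (\<Sum>s'\<in>UNIV. j s' x))))
        = j s x * (ln (cond j s x) - ln (margS j s))" for s x
  proof (cases "j s x = 0")
    case False
    then have pos: "0 < j s x" using j_nonneg[of s x] by simp
    then have "0 < (\<Sum>s'\<in>UNIV. j s' x)" by (rule column_sum_pos[of j x s, OF j_nonneg])
    with pos margS_pos[of s] show ?thesis
      by (simp add: cond_def margS_def ln_div ln_mult)
  qed simp
  then show ?thesis unfolding mi_on_def by simp
qed

definition posterior_divergence ::
    "('s::finite \<Rightarrow> 'r::finite \<Rightarrow> real) \<Rightarrow> ('r \<Rightarrow> 's \<Rightarrow> real) \<Rightarrow> real" where
  "posterior_divergence p m = (\<Sum>s\<in>UNIV. \<Sum>r\<in>UNIV. if p s r = 0 then 0 else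
      p s r * ln (cond p s r / m r s))"

lemma dI_D_eq_posterior_divergence: "dI_D p Q = posterior_divergence p (\<lambda>r s. cond (phat p Q) s r)"
  unfolding dI_D_def posterior_divergence_def ..

lemma dl_obj_eq_posterior_divergence: "dl_obj p Q \<theta> = posterior_divergence p (dl_model p Q \<theta>)"
  unfolding dl_obj_def posterior_divergence_def ..

locale idempotent_stochastic =
  fixes Q :: "'r::finite \<Rightarrow> 'r \<Rightarrow> real"
  assumes Q_nonneg: "\<And>r rh. 0 \<le> Q r rh"
    and Q_rows: "\<And>r. (\<Sum>rh\<in>UNIV. Q r rh) = 1"
    and Q_idem: "\<And>r rh. (\<Sum>r'\<in>UNIV. Q r r' * Q r' rh) = Q r rh"
    and Q_diag: "\<And>r. 0 < Q r r"
begin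

lemma Q_pos_trans:
  assumes "0 < Q a b" and "0 < Q b c"
  shows "0 < Q a c"
proof -
  have "Q a b * Q b c \<le> (\<Sum>x\<in>UNIV. Q a x * Q x c)"
    by (rule member_le_sum[where f = "\<lambda>x. Q a x * Q x c"]) (auto simp: Q_nonneg)
  moreover have "0 < Q a b * Q b c" using assms by simp
  ultimately show ?thesis using Q_idem[of a c] by linarith
qed

lemma Q_pos_sym:
  assumes "0 < Q r y"
  shows "0 < Q y r"
proof -
  define B where "B = {x. 0 < Q x r}"
  define mass where "mass x = (\<Sum>z\<in>B. Q x z)" for x
  have mass_le_1: "mass x \<le> 1" for x
    using sum_mono2[of UNIV B "Q x"] Q_nonneg Q_rows[of x] by (simp add: mass_def)
  have mass_outside: "mass x = 0" if "x \<notin> B" for x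
  proof -
    have "Q x z = 0" if "z \<in> B" for z
      using Q_pos_trans[of x z r] Q_nonneg[of x z] \<open>x \<notin> B\<close> that by (force simp: B_def)
    then show ?thesis by (simp add: mass_def)
  qed
  \<comment> \<open>By idempotence, mass r is the Q r-average of mass, which vanishes outside B.\<close>
  have "(\<Sum>x\<in>UNIV. Q r x * mass x) = (\<Sum>z\<in>B. \<Sum>x\<in>UNIV. Q r x * Q x z)"
    unfolding mass_def sum_distrib_left by (rule sum.swap)
  then have "mass r = (\<Sum>x\<in>UNIV. Q r x * mass x)" by (simp add: Q_idem mass_def)
  also have "\<dots> = (\<Sum>x\<in>B. Q r x * mass x)"
    using mass_outside by (intro sum.mono_neutral_right) auto
  finally have "(\<Sum>x\<in>B. Q r x * (1 - mass x)) = 0"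
    by (simp add: algebra_simps sum_subtractf mass_def)
  moreover have "r \<in> B" using Q_diag by (simp add: B_def)
  ultimately have "Q r r * (1 - mass r) = 0"
    using sum_nonneg_eq_0_iff[of B "\<lambda>x. Q r x * (1 - mass x)"] mass_le_1 Q_nonneg by simp
  then have "(\<Sum>z\<in>B. Q r z) = 1" using Q_diag[of r] by (simp add: mass_def)
  then have "(\<Sum>z\<in>UNIV - B. Q r z) = 0"
    using sum.subset_diff[of B UNIV "Q r"] Q_rows[of r] by simp
  then have "Q r z = 0" if "z \<notin> B" for z
    using sum_nonneg_eq_0_iff[of "UNIV - B" "Q r"] Q_nonneg that by simp
  with assms show ?thesis by (force simp: B_def)
qed

lemma Q_rows_eq_if_pos:
  assumes "0 < Q r y"
  shows "Q r = Q y"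
proof
  fix c
  define C where "C = {x. 0 < Q r x}"
  have "r \<in> C" "y \<in> C" using Q_diag assms by (auto simp: C_def)
  define M where "M = Max ((\<lambda>x. Q x c) ` C)"
  have "M \<in> (\<lambda>x. Q x c) ` C" unfolding M_def using \<open>r \<in> C\<close> by (intro Max_in) auto
  then obtain x0 where x0: "x0 \<in> C" "Q x0 c = M" by blast
  have le_M: "Q x c \<le> M" if "x \<in> C" for x using that by (simp add: M_def)
  have x0_reach: "0 < Q x0 x \<longleftrightarrow> x \<in> C" for x
    using Q_pos_trans[of r x0 x] Q_pos_trans[of x0 r x] Q_pos_sym[of r x0] x0(1)
    by (auto simp: C_def)
  \<comment> \<open>Row x0 averages the column c over C, where it is bounded by its value M at x0.\<close>
  have "(\<Sum>x\<in>UNIV. Q x0 x * (M - Q x c)) = M * (\<Sum>x\<in>UNIV. Q x0 x) - (\<Sum>x\<in>UNIV. Q x0 x * Q x c)"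
    by (simp add: algebra_simps sum_subtractf sum_distrib_left)
  also have "\<dots> = 0" using Q_rows[of x0] Q_idem[of x0 c] x0(2) by simp
  finally have "(\<Sum>x\<in>UNIV. Q x0 x * (M - Q x c)) = 0" .
  moreover have "0 \<le> Q x0 x * (M - Q x c)" for x
  proof (cases "0 < Q x0 x")
    case True
    then show ?thesis using le_M[of x] x0_reach[of x] by simp
  next
    case False
    then show ?thesis using Q_nonneg[of x0 x] by simp
  qed
  ultimately have zero: "Q x0 x * (M - Q x c) = 0" for x
    using sum_nonneg_eq_0_iff[of UNIV "\<lambda>x. Q x0 x * (M - Q x c)"] by simp
  have "Q x c = M" if "x \<in> C" for x using zero[of x] x0_reach[of x] that by simp
  with \<open>r \<in> C\<close> \<open>y \<in> C\<close> show "Q r c = Q y c" by simp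
qed

lemma Q_pos_iff_rows_eq: "0 < Q r y \<longleftrightarrow> Q r = Q y"
  using Q_rows_eq_if_pos[of r y] Q_diag[of y] by metis

lemma Q_eq_if_rows_eq: "Q r' r = (if Q r' = Q r then Q r r else 0)"
  using Q_pos_iff_rows_eq[of r' r] Q_nonneg[of r' r] by auto

lemma sum_Q_mult_invariant:
  assumes "\<And>a b. Q a = Q b \<Longrightarrow> h a = h b"
  shows "(\<Sum>r\<in>UNIV. Q r' r * h r) = h r'"
proof -
  have "Q r' r * h r = Q r' r * h r'" for r
  proof (cases "Q r' = Q r")
    case True
    then show ?thesis using assms[of r' r] by simp
  next
    case False
    then show ?thesis using Q_eq_if_rows_eq[of r' r] by simp
  qed
  then have "(\<Sum>r\<in>UNIV. Q r' r * h r) = (\<Sum>r\<in>UNIV. Q r' r * h r')"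
    by (rule sum.cong[OF refl])
  also have "\<dots> = h r'" by (simp add: sum_distrib_right[symmetric] Q_rows)
  finally show ?thesis .
qed

lemma sum_phat_mult_invariant:
  assumes "\<And>a b. Q a = Q b \<Longrightarrow> h a = h b"
  shows "(\<Sum>r\<in>UNIV. phat p Q s r * h r) = (\<Sum>r\<in>UNIV. p s r * h r)"
proof -
  have "(\<Sum>r\<in>UNIV. phat p Q s r * h r) = (\<Sum>r'\<in>UNIV. p s r' * (\<Sum>r\<in>UNIV. Q r' r * h r))"
    unfolding phat_def sum_distrib_right sum_distrib_left
    by (subst sum.swap) (simp add: mult.assoc)
  then show ?thesis using sum_Q_mult_invariant[OF assms] by simp
qed

lemma margS_phat: "margS (phat p Q) s = margS p s"
  using sum_phat_mult_invariant[of "\<lambda>_. 1" p s] by (simp add: margS_def)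

lemma push_phat:
  assumes "\<And>a b. Q a = Q b \<Longrightarrow> f a = f b"
  shows "push (phat p Q) f = push p f"
  unfolding push_eq_sum_if by (intro ext sum_phat_mult_invariant) (auto dest: assms)

definition class_mass :: "('s \<Rightarrow> 'r \<Rightarrow> real) \<Rightarrow> 's \<Rightarrow> 'r \<Rightarrow> real" where
  "class_mass p s r = (\<Sum>r'\<in>{r'. Q r' = Q r}. p s r')"

lemma phat_eq_class_mass: "phat p Q s r = class_mass p s r * Q r r"
proof -
  have "p s r' * Q r' r = (if Q r' = Q r then p s r' * Q r r else 0)" for r'
    using Q_eq_if_rows_eq[of r' r] by simp
  then show ?thesis
    by (simp add: phat_def class_mass_def sum_distrib_right sum.inter_filter[symmetric])
qed

text \<open>The positive factor Q r r cancels in every column-normalised quantity.\<close>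

lemma cond_phat_invariant:
  assumes "Q a = Q b"
  shows "cond (phat p Q) s a = cond (phat p Q) s b"
proof -
  have "cond (phat p Q) s r = class_mass p s r / (\<Sum>s'\<in>UNIV. class_mass p s' r)" for r
    using Q_diag[of r] unfolding cond_def phat_eq_class_mass sum_distrib_right[symmetric] by simp
  with assms show ?thesis by (simp add: class_mass_def)
qed

lemma dec_phat_invariant:
  assumes "Q a = Q b"
  shows "dec (phat p Q) a = dec (phat p Q) b"
  unfolding dec_def by (simp only: cond_phat_invariant[OF assms])

lemma slist_phat_invariant:
  assumes "Q a = Q b"
  shows "slist (phat p Q) a = slist (phat p Q) b"
  unfolding slist_def by (simp only: cond_phat_invariant[OF assms])

end

locale idempotent_code = idempotent_stochastic Q for Q :: "'r::finite \<Rightarrow> 'r \<Rightarrow> real" +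
  fixes p :: "'s::finite \<Rightarrow> 'r \<Rightarrow> real"
  assumes p_nonneg: "\<And>s r. 0 \<le> p s r"
    and p_sum: "(\<Sum>s\<in>UNIV. \<Sum>r\<in>UNIV. p s r) = 1"
    and margS_pos: "\<And>s. 0 < margS p s"
begin

lemma phat_nonneg: "0 \<le> phat p Q s r"
  unfolding phat_def by (intro sum_nonneg mult_nonneg_nonneg p_nonneg Q_nonneg)

lemma phat_pos: "0 < p s r \<Longrightarrow> 0 < phat p Q s r"
proof -
  assume "0 < p s r"
  moreover have "p s r \<le> class_mass p s r"
    unfolding class_mass_def by (rule member_le_sum) (auto simp: p_nonneg)
  ultimately show ?thesis using Q_diag[of r] by (simp add: phat_eq_class_mass)
qed

lemma mi_on_minus_mi_on_phat: "mi_on UNIV p - mi_on UNIV (phat p Q) = dI_D p Q"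
proof -
  let ?c = "cond (phat p Q)"
  have "mi_on UNIV (phat p Q)
      = (\<Sum>s\<in>UNIV. \<Sum>r\<in>UNIV. phat p Q s r * (ln (?c s r) - ln (margS p s)))"
    using mi_on_UNIV_eq[of "phat p Q", OF phat_nonneg] margS_pos by (simp only: margS_phat)
  also have "\<dots> = (\<Sum>s\<in>UNIV. \<Sum>r\<in>UNIV. p s r * (ln (?c s r) - ln (margS p s)))"
    by (rule sum.cong[OF refl], rule sum_phat_mult_invariant) (metis cond_phat_invariant)
  finally have I_phat: "mi_on UNIV (phat p Q) = \<dots>" .
  have "(if p s r = 0 then 0 else p s r * ln (cond p s r / ?c s r))
      = p s r * (ln (cond p s r) - ln (margS p s)) - p s r * (ln (?c s r) - ln (margS p s))" for s r
  proof (cases "p s r = 0")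
    case False
    then have p_pos: "0 < p s r" using p_nonneg[of s r] by simp
    have "ln (cond p s r / ?c s r) = ln (cond p s r) - ln (?c s r)"
      by (intro ln_divide_pos cond_pos p_nonneg phat_nonneg p_pos phat_pos)
    with False show ?thesis by (simp add: right_diff_distrib)
  qed simp
  then show ?thesis
    unfolding dI_D_def I_phat mi_on_UNIV_eq[of p, OF p_nonneg margS_pos]
    by (simp add: sum_subtractf)
qed

text \<open>Class invariance of m lets the sum be taken against P(s,rhat), where it collapses to
  the column masses of Rhat weighted by the total mass of m.\<close>

lemma sum_p_mult_ratio_le_1:
  assumes m_nonneg: "\<And>r s. 0 \<le> m r s" and m_sum: "\<And>r. (\<Sum>s\<in>UNIV. m r s) \<le> 1"
    and m_invariant: "\<And>a b s. Q a = Q b \<Longrightarrow> m a s = m b s"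
  shows "(\<Sum>s\<in>UNIV. \<Sum>r\<in>UNIV. p s r * (m r s / cond (phat p Q) s r)) \<le> 1"
proof -
  define col where "col r = (\<Sum>s'\<in>UNIV. phat p Q s' r)" for r
  have "(\<Sum>s\<in>UNIV. \<Sum>r\<in>UNIV. p s r * (m r s / cond (phat p Q) s r))
      = (\<Sum>s\<in>UNIV. \<Sum>r\<in>UNIV. phat p Q s r * (m r s / cond (phat p Q) s r))"
  proof (rule sum.cong[OF refl], rule sum_phat_mult_invariant[symmetric])
    fix s a b
    assume "Q a = Q b"
    then show "m a s / cond (phat p Q) s a = m b s / cond (phat p Q) s b"
      by (simp only: m_invariant[of a b] cond_phat_invariant[of a b])
  qed
  also have "\<dots> \<le> (\<Sum>s\<in>UNIV. \<Sum>r\<in>UNIV. col r * m r s)"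
  proof (intro sum_mono)
    fix s r
    show "phat p Q s r * (m r s / cond (phat p Q) s r) \<le> col r * m r s"
    proof (cases "phat p Q s r = 0")
      case True
      then show ?thesis using m_nonneg phat_nonneg by (simp add: col_def sum_nonneg)
    next
      case False
      then have "0 < phat p Q s r" using phat_nonneg[of s r] by simp
      then have "0 < col r" unfolding col_def by (rule column_sum_pos[of "phat p Q" r s, OF phat_nonneg])
      with False show ?thesis by (simp add: cond_def col_def[symmetric])
    qed
  qed
  also have "\<dots> = (\<Sum>r\<in>UNIV. col r * (\<Sum>s\<in>UNIV. m r s))"
    by (subst sum.swap) (simp add: sum_distrib_left)
  also have "\<dots> \<le> (\<Sum>r\<in>UNIV. col r)"
    using m_sum phat_nonneg by (intro sum_mono mult_left_le) (auto simp: col_def intro: sum_nonneg)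
  also have "\<dots> = (\<Sum>s\<in>UNIV. margS (phat p Q) s)"
    unfolding col_def margS_def by (rule sum.swap)
  also have "\<dots> = 1" using p_sum unfolding margS_phat by (simp add: margS_def)
  finally show ?thesis .
qed

lemma posterior_divergence_cond_phat_le:
  assumes m_nonneg: "\<And>r s. 0 \<le> m r s" and m_sum: "\<And>r. (\<Sum>s\<in>UNIV. m r s) \<le> 1"
    and m_invariant: "\<And>a b s. Q a = Q b \<Longrightarrow> m a s = m b s"
    and m_pos: "\<And>s r. 0 < p s r \<Longrightarrow> 0 < m r s"
  shows "posterior_divergence p (\<lambda>r s. cond (phat p Q) s r) \<le> posterior_divergence p m"
proof -
  let ?c = "cond (phat p Q)"
  have "(if p s r = 0 then 0 else p s r * ln (cond p s r / ?c s r)) + p s r - p s r * (m r s / ?c s r)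
      \<le> (if p s r = 0 then 0 else p s r * ln (cond p s r / m r s))" for s r
  proof (cases "p s r = 0")
    case False
    then have p_pos: "0 < p s r" using p_nonneg[of s r] by simp
    have pos: "0 < cond p s r" "0 < ?c s r" "0 < m r s"
      using cond_pos[of p r s] cond_pos[of "phat p Q" r s] phat_pos[OF p_pos] m_pos[OF p_pos]
        p_pos p_nonneg phat_nonneg by auto
    have "ln (m r s / ?c s r) \<le> m r s / ?c s r - 1" using pos by (intro ln_le_minus_one) simp
    then have "ln (cond p s r / ?c s r) + 1 - m r s / ?c s r \<le> ln (cond p s r / m r s)"
      using pos by (simp add: ln_div)
    from mult_left_mono[OF this less_imp_le[OF p_pos]] False show ?thesis
      by (simp add: algebra_simps)
  qed simp
  then have "(\<Sum>s\<in>UNIV. \<Sum>r\<in>UNIV. (if p s r = 0 then 0 else p s r * ln (cond p s r / ?c s r))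
        + p s r - p s r * (m r s / ?c s r)) \<le> posterior_divergence p m"
    unfolding posterior_divergence_def by (intro sum_mono)
  moreover have "(\<Sum>s\<in>UNIV. \<Sum>r\<in>UNIV. (if p s r = 0 then 0 else p s r * ln (cond p s r / ?c s r))
        + p s r - p s r * (m r s / ?c s r))
      = posterior_divergence p (\<lambda>r s. ?c s r) + 1 - (\<Sum>s\<in>UNIV. \<Sum>r\<in>UNIV. p s r * (m r s / ?c s r))"
    unfolding posterior_divergence_def using p_sum by (simp only: sum.distrib sum_subtractf)
  ultimately show ?thesis
    using sum_p_mult_ratio_le_1[where m = m, OF m_nonneg m_sum m_invariant] by linarith
qed

lemma dl_weight_eq: "dl_weight p Q \<theta> r s = margS p s * (phat p Q s r / margS p s) powr \<theta>"
proof -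
  have "\<not> (\<exists>s' r'. p s' r' / margS p s' > phat p Q s' r' / margS p s'
                  \<and> phat p Q s' r' / margS p s' = 0)"
  proof
    assume "\<exists>s' r'. p s' r' / margS p s' > phat p Q s' r' / margS p s'
                  \<and> phat p Q s' r' / margS p s' = 0"
    then obtain s' r' where lt: "p s' r' / margS p s' > phat p Q s' r' / margS p s'"
      and zero: "phat p Q s' r' / margS p s' = 0" by blast
    have "phat p Q s' r' = 0" using zero margS_pos[of s'] by simp
    moreover have "0 < p s' r'" using lt zero margS_pos[of s'] by (simp add: zero_less_divide_iff)
    ultimately show False using phat_pos[of s' r'] by simp
  qed
  then show ?thesis unfolding dl_weight_def Let_def by auto
qed

lemma dl_weight_nonneg: "0 \<le> dl_weight p Q \<theta> r s"
  unfolding dl_weight_eq using margS_pos[of s] by simp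

lemma dl_model_invariant:
  assumes "Q a = Q b"
  shows "dl_model p Q \<theta> a s = dl_model p Q \<theta> b s"
proof -
  define v where "v s r = margS p s * (class_mass p s r / margS p s) powr \<theta>" for s r
  have "dl_weight p Q \<theta> r s = v s r * Q r r powr \<theta>" for r s
  proof -
    have "phat p Q s r / margS p s = class_mass p s r / margS p s * Q r r"
      by (simp add: phat_eq_class_mass)
    then have "(phat p Q s r / margS p s) powr \<theta>
        = (class_mass p s r / margS p s) powr \<theta> * Q r r powr \<theta>"
      by (simp only: powr_mult)
    then show ?thesis unfolding dl_weight_eq v_def by simp
  qed
  then have "dl_model p Q \<theta> r s = v s r / (\<Sum>s'\<in>UNIV. v s' r)" for r
    using Q_diag[of r] by (simp add: dl_model_def sum_distrib_right[symmetric])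
  with assms show ?thesis by (simp add: v_def class_mass_def)
qed

lemma dl_model_nonneg: "0 \<le> dl_model p Q \<theta> r s"
  unfolding dl_model_def by (intro divide_nonneg_nonneg sum_nonneg dl_weight_nonneg)

lemma sum_dl_model_le_1: "(\<Sum>s\<in>UNIV. dl_model p Q \<theta> r s) \<le> 1"
  unfolding dl_model_def sum_divide_distrib[symmetric]
  by (cases "(\<Sum>s'\<in>UNIV. dl_weight p Q \<theta> r s') = 0") simp_all

lemma dl_model_pos:
  assumes "0 < p s r"
  shows "0 < dl_model p Q \<theta> r s"
proof -
  have "0 < dl_weight p Q \<theta> r s"
    unfolding dl_weight_eq using phat_pos[OF assms] margS_pos[of s] by simp
  then show ?thesis
    unfolding dl_model_def using column_sum_pos[of "\<lambda>s r. dl_weight p Q \<theta> r s" r s]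
    by (simp add: dl_weight_nonneg)
qed

lemma dl_model_1: "dl_model p Q 1 r s = cond (phat p Q) s r"
proof -
  have "dl_weight p Q 1 r s = phat p Q s r" for s
    unfolding dl_weight_eq using margS_pos[of s] phat_nonneg[of s r] by simp
  then show ?thesis unfolding dl_model_def cond_def by simp
qed

lemma dI_D_le_dl_obj: "dI_D p Q \<le> dl_obj p Q \<theta>"
  unfolding dI_D_eq_posterior_divergence dl_obj_eq_posterior_divergence
  by (intro posterior_divergence_cond_phat_le dl_model_nonneg sum_dl_model_le_1
      dl_model_invariant dl_model_pos)

lemma dl_obj_1: "dl_obj p Q 1 = dI_D p Q"
  unfolding dI_D_eq_posterior_divergence dl_obj_eq_posterior_divergence dl_model_1 ..

lemma dI_DL_eq_dI_D: "dI_DL p Q = dI_D p Q"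
  unfolding dI_DL_def
proof (rule cInf_eq_minimum)
  show "dI_D p Q \<in> range (dl_obj p Q)" using dl_obj_1 by (metis rangeI)
qed (auto intro: dI_D_le_dl_obj)

end

theorem theorem6:
  fixes p :: "'s::{finite,linorder} \<Rightarrow> 'r::finite \<Rightarrow> real"
    and Q :: "'r \<Rightarrow> 'r \<Rightarrow> real"
    and g :: "'r \<Rightarrow> 'b"
  assumes p_nonneg: "\<forall>s r. 0 \<le> p s r"
    and p_sum: "(\<Sum>s\<in>UNIV. \<Sum>r\<in>UNIV. p s r) = 1"
    and pS_pos: "\<forall>s. 0 < margS p s"
    and Q_nonneg: "\<forall>r rh. 0 \<le> Q r rh"
    and Q_rows: "\<forall>r. (\<Sum>rh\<in>UNIV. Q r rh) = 1"
    and Q_idem: "\<forall>r rh. (\<Sum>r'\<in>UNIV. Q r r' * Q r' rh) = Q r rh"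
    and Q_diag: "\<forall>r. 0 < Q r r"
    and g_info: "mi_on (range g) (push (phat p Q) g) = mi_on UNIV (phat p Q)"
  shows
    "(let ph = phat p Q;
          IR = mi_on UNIV p;
          dI_hat = IR - mi_on UNIV ph;
          dI_bar = IR - mi_on (range g) (push ph g);
          dI_sorted = IR - mi_on (range (slist ph)) (push ph (slist ph));
          dI_LS = IR - mi_on (range (slist ph)) (push p (slist ph));
          dI_dec = IR - mi_on (range (dec ph)) (push ph (dec ph));
          dI_B = IR - mi_on (range (dec ph)) (push p (dec ph));
          dA = acc p (dec p) - acc ph (dec ph);
          dA_B = acc p (dec p) - acc p (dec ph)
      in dI_hat = dI_bar \<and> dI_bar = dI_D p Q \<and> dI_D p Q = dI_DL p Q
         \<and> (\<exists>\<theta>. dl_obj p Q \<theta> = dI_DL p Q) \<and> (\<forall>\<theta>. dI_DL p Q \<le> dl_obj p Q \<theta>)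
         \<and> dI_sorted = dI_LS \<and> dI_dec = dI_B \<and> dA = dA_B)"
proof -
  interpret idempotent_code Q p using assms by unfold_locales auto
  let ?ph = "phat p Q"
  have push_slist: "push ?ph (slist ?ph) = push p (slist ?ph)"
    by (intro push_phat slist_phat_invariant)
  have push_dec: "push ?ph (dec ?ph) = push p (dec ?ph)"
    by (intro push_phat dec_phat_invariant)
  have acc_dec: "acc ?ph (dec ?ph) = acc p (dec ?ph)"
    unfolding acc_def push_dec margS_phat ..
  show ?thesis
    unfolding Let_def push_slist push_dec acc_dec g_info mi_on_minus_mi_on_phat dI_DL_eq_dI_D
    using dI_D_le_dl_obj dl_obj_1 by auto
qed

end
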